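(* Fix $\alpha\in(0,1)$ and constants $c_1,c_2,c_3,c_4>0$. There exist $C>0$ and $n_0$ such that for all $n\ge n_0$, every prime $p$ with $c_1n^\alpha\le p\le c_2n^\alpha$, every integer $t\ge c_3p^3$, every $b\in\{0,1\}$, and all integers $a_0,a_1,\dots,a_t$ and $u_0,u_1,\dots,u_t$ with $1\le a_i\le c_4\,p/\log n$ for all $i\in\{1,\dots,t\}$, setting $S=a_0+\sum_{i=1}^ta_ix_i$ and $U=u_0+\sum_{i=1}^tu_ix_i$, $$\Pr_{x\sim\mathrm{Unif}(\{0,1\}^t)}\big[\mathrm{MM}_p(S)\oplus(U\bmod 2)=b\big]\ \ge\ \tfrac12-\tfrac{C}{\log n}.$$
   Context: For odd prime $p$ and integer $a$, $\mathrm{MM}_p(a)=0$ if $(a\bmod p)\in\{0,\dots,(p-1)/2\}$ and $\mathrm{MM}_p(a)=1$ otherwise, where $a\bmod p\in\{0,\dots,p-1\}$. *)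

theory Defs
  imports "HOL-Library.FuncSet" "HOL-Computational_Algebra.Primes" Complex_Main
begin

definition MM :: "nat \<Rightarrow> int \<Rightarrow> int" where
  "MM p a = (if a mod int p \<in> {0..(int p - 1) div 2} then 0 else 1)"

end

theory Submission
  imports Defs "HOL-Analysis.Convex" "HOL-Real_Asymp.Real_Asymp"
begin

text \<open>The pair (S mod p, U mod 2) is the position after t steps of a lazy random walk on
  \<open>\<int>/p \<times> \<int>/2\<close> whose i-th step is (a i, u i) with probability 1/2. Measure the distance of its law
  from the laws that are uniform on each fibre \<open>\<int>/p \<times> {e}\<close> by the energy, the squared
  \<open>\<ell>\<^sup>2\<close>-distance to the fibrewise mean. One step \<open>\<mu> \<mapsto> (\<mu> + \<mu>(\<cdot> - g))/2\<close> lowers the energy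
  by a quarter of the Dirichlet form of g; as p does not divide the first coordinate of g, the
  orbit of 2g sweeps every fibre in fewer than p steps, which yields a Poincare inequality
  energy \<open>\<le> 2p\<^sup>2\<close> Dirichlet form. So the energy decays like \<open>(1 - 1/(8p\<^sup>2))\<^sup>t\<close>, which is negligible
  once \<open>t \<ge> c\<^sub>3p\<^sup>3\<close>. A fibrewise uniform law gives the event \<open>MM\<^sub>p(S) \<oplus> U = b\<close> probability
  at least (p - 1)/(2p), and by Cauchy-Schwarz the true law differs by at most
  \<open>sqrt (2p \<cdot> energy)\<close>.\<close>

definition grid :: "nat \<Rightarrow> (int \<times> int) set" where
  "grid p = {0..<int p} \<times> {0..<2}"

definition shift :: "nat \<Rightarrow> int \<times> int \<Rightarrow> int \<times> int \<Rightarrow> int \<times> int" where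
  "shift p g z = ((fst z - fst g) mod int p, (snd z - snd g) mod 2)"

definition fiber_mass :: "nat \<Rightarrow> (int \<times> int \<Rightarrow> real) \<Rightarrow> int \<Rightarrow> real" where
  "fiber_mass p \<mu> e = (\<Sum>y\<in>{0..<int p}. \<mu> (y, e))"

definition fiber_deviation :: "nat \<Rightarrow> (int \<times> int \<Rightarrow> real) \<Rightarrow> int \<times> int \<Rightarrow> real" where
  "fiber_deviation p \<mu> z = \<mu> z - fiber_mass p \<mu> (snd z) / real p"

definition fiber_energy :: "nat \<Rightarrow> (int \<times> int \<Rightarrow> real) \<Rightarrow> real" where
  "fiber_energy p \<mu> = (\<Sum>z\<in>grid p. (fiber_deviation p \<mu> z)\<^sup>2)"

definition shift_average :: "nat \<Rightarrow> int \<times> int \<Rightarrow> (int \<times> int \<Rightarrow> real) \<Rightarrow> int \<times> int \<Rightarrow> real" where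
  "shift_average p g \<mu> z = (\<mu> z + \<mu> (shift p g z)) / 2"

lemma finite_grid [simp]: "finite (grid p)"
  by (simp add: grid_def)

lemma card_grid: "card (grid p) = 2 * p"
  by (simp add: grid_def card_cartesian_product)

lemma sum_grid: "(\<Sum>z\<in>grid p. h z) = (\<Sum>e\<in>{0..<2::int}. \<Sum>y\<in>{0..<int p}. h (y, e))"
  unfolding grid_def sum.cartesian_product' by (rule sum.swap)

lemma sum_grid_fiber_mass: "(\<Sum>z\<in>grid p. \<mu> z) = (\<Sum>e\<in>{0..<2::int}. fiber_mass p \<mu> e)"
  by (simp add: sum_grid fiber_mass_def)

lemma bij_betw_mod_diff:
  fixes m c :: int
  assumes "m > 0"
  shows "bij_betw (\<lambda>y. (y - c) mod m) {0..<m} {0..<m}"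
proof -
  have "inj_on (\<lambda>y. (y - c) mod m) {0..<m}"
  proof (rule inj_onI)
    fix x y assume "x \<in> {0..<m}" "y \<in> {0..<m}" and eq: "(x - c) mod m = (y - c) mod m"
    have "((x - c) + c) mod m = ((y - c) + c) mod m"
      using eq by (rule mod_add_cong) simp
    with \<open>x \<in> {0..<m}\<close> \<open>y \<in> {0..<m}\<close> show "x = y"
      by simp
  qed
  moreover have "(\<lambda>y. (y - c) mod m) ` {0..<m} \<subseteq> {0..<m}"
    using assms by auto
  ultimately show ?thesis
    by (simp add: bij_betw_def endo_inj_surj)
qed

lemma bij_betw_shift: "p > 0 \<Longrightarrow> bij_betw (shift p g) (grid p) (grid p)"
proof -
  assume "p > 0"
  have "shift p g = map_prod (\<lambda>y. (y - fst g) mod int p) (\<lambda>e. (e - snd g) mod 2)"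
    by (auto simp: shift_def)
  with \<open>p > 0\<close> show ?thesis
    unfolding grid_def by (simp add: bij_betw_map_prod bij_betw_mod_diff)
qed

lemma sum_shift: "p > 0 \<Longrightarrow> (\<Sum>z\<in>grid p. h (shift p g z)) = (\<Sum>z\<in>grid p. h z)"
  using sum.reindex_bij_betw [OF bij_betw_shift] .

lemma sum_funpow_shift:
  assumes "p > 0"
  shows "(\<Sum>z\<in>grid p. h ((shift p g ^^ i) z)) = (\<Sum>z\<in>grid p. h z)"
proof (induction i)
  case (Suc i)
  then show ?case
    using sum_shift [OF assms, of "\<lambda>z. h ((shift p g ^^ i) z)" g]
    by (simp add: funpow_Suc_right del: funpow.simps)
qed simp

lemma funpow_shift:
  assumes "z \<in> grid p"
  shows "(shift p g ^^ j) z = ((fst z - int j * fst g) mod int p, (snd z - int j * snd g) mod 2)"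
proof (induction j)
  case 0
  with assms show ?case by (cases z) (simp add: grid_def)
next
  case (Suc j)
  then show ?case by (simp add: shift_def mod_diff_left_eq algebra_simps)
qed

lemma fiber_mass_shift_average:
  assumes "p > 0"
  shows "fiber_mass p (shift_average p g \<mu>) e
    = (fiber_mass p \<mu> e + fiber_mass p \<mu> ((e - snd g) mod 2)) / 2"
proof -
  have "(\<Sum>y\<in>{0..<int p}. \<mu> ((y - fst g) mod int p, (e - snd g) mod 2))
      = fiber_mass p \<mu> ((e - snd g) mod 2)"
    unfolding fiber_mass_def using assms
    by (intro sum.reindex_bij_betw [of "\<lambda>y. (y - fst g) mod int p"] bij_betw_mod_diff) simp
  then show ?thesis
    by (simp add: fiber_mass_def shift_average_def shift_def sum.distrib add_divide_distrib
                  sum_divide_distrib [symmetric])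
qed

lemma fiber_deviation_shift_average:
  "p > 0 \<Longrightarrow> fiber_deviation p (shift_average p g \<mu>) z
    = (fiber_deviation p \<mu> z + fiber_deviation p \<mu> (shift p g z)) / 2"
  by (simp add: fiber_deviation_def fiber_mass_shift_average shift_average_def shift_def
                field_simps)

lemma fiber_energy_shift_average:
  assumes "p > 0"
  shows "fiber_energy p (shift_average p g \<mu>)
    = fiber_energy p \<mu> - (\<Sum>z\<in>grid p. (fiber_deviation p \<mu> z - fiber_deviation p \<mu> (shift p g z))\<^sup>2) / 4"
proof -
  let ?d = "fiber_deviation p \<mu>"
  have "fiber_energy p (shift_average p g \<mu>)
      = (\<Sum>z\<in>grid p. ((?d z)\<^sup>2 + (?d (shift p g z))\<^sup>2) / 2 - (?d z - ?d (shift p g z))\<^sup>2 / 4)"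
    unfolding fiber_energy_def
    by (intro sum.cong) (auto simp: fiber_deviation_shift_average [OF assms] power2_eq_square
                                    field_simps)
  also have "\<dots> = ((\<Sum>z\<in>grid p. (?d z)\<^sup>2) + (\<Sum>z\<in>grid p. (?d (shift p g z))\<^sup>2)) / 2
      - (\<Sum>z\<in>grid p. (?d z - ?d (shift p g z))\<^sup>2) / 4"
    by (simp add: sum_subtractf sum.distrib sum_divide_distrib [symmetric])
  also have "\<dots> = fiber_energy p \<mu> - (\<Sum>z\<in>grid p. (?d z - ?d (shift p g z))\<^sup>2) / 4"
    using sum_shift [OF assms, of "\<lambda>z. (?d z)\<^sup>2" g] unfolding fiber_energy_def by simp
  finally show ?thesis .
qed

lemma fiber_mass_fiber_deviation: "p > 0 \<Longrightarrow> fiber_mass p (fiber_deviation p \<mu>) e = 0"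
  by (simp add: fiber_mass_def fiber_deviation_def sum_subtractf)

lemma exists_less_mod_diff_mult_eq:
  fixes c y y' :: int
  assumes "coprime c (int m)" "y' \<in> {0..<int m}"
  shows "\<exists>k<m. (y - int k * c) mod int m = y'"
proof -
  obtain w v where bezout: "w * c + v * int m = 1"
    using bezout_int [of c "int m"] assms(1) by (auto simp: coprime_iff_gcd_eq_1)
  define q where "q = ((y - y') * w) div int m"
  define k where "k = ((y - y') * w) mod int m"
  have "k = (y - y') * w - q * int m"
    by (simp add: k_def q_def minus_div_mult_eq_mod [symmetric])
  then have "(y - k * c) - y' = int m * ((y - y') * v + q * c)"
    using arg_cong [OF bezout, of "\<lambda>s. (y - y') * s"] by algebra
  then have "y - k * c = y' + int m * ((y - y') * v + q * c)"
    by linarith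
  then have "(y - k * c) mod int m = y'"
    using assms(2) by simp
  moreover have "0 \<le> k" "k < int m"
    using assms(2) by (auto simp: k_def)
  ultimately show ?thesis
    by (intro exI [of _ "nat k"]) simp
qed

lemma funpow_shift_reaches_fiber:
  assumes "prime p" "p > 2" "\<not> int p dvd fst g" "z \<in> grid p" "y' \<in> {0..<int p}"
  shows "\<exists>k<p. (shift p g ^^ (2 * k)) z = (y', snd z)"
proof -
  have "\<not> int p dvd 2"
    using assms(2) by (auto dest: zdvd_imp_le)
  moreover have "prime (int p)"
    using assms(1) by simp
  ultimately have "\<not> int p dvd 2 * fst g"
    using assms(3) by (simp add: prime_dvd_mult_iff)
  with \<open>prime (int p)\<close> have "coprime (int p) (2 * fst g)"
    by (rule prime_imp_coprime)
  then have "coprime (2 * fst g) (int p)"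
    by (rule coprime_commute [THEN iffD1])
  then obtain k where "k < p" and k: "(fst z - int k * (2 * fst g)) mod int p = y'"
    using exists_less_mod_diff_mult_eq assms(5) by blast
  have "2 dvd (snd z - int (2 * k) * snd g) - snd z"
    by simp
  then have "(snd z - int (2 * k) * snd g) mod 2 = snd z mod 2"
    by (simp only: mod_eq_dvd_iff)
  also have "\<dots> = snd z"
    using assms(4) by (auto simp: grid_def)
  finally have "(snd z - int (2 * k) * snd g) mod 2 = snd z" .
  then have "(shift p g ^^ (2 * k)) z = (y', snd z)"
    using k by (simp add: funpow_shift [OF assms(4)] algebra_simps)
  with \<open>k < p\<close> show ?thesis
    by blast
qed

lemma fiber_difference_le_path_energy:
  fixes \<nu> :: "int \<times> int \<Rightarrow> real"
  assumes "prime p" "p > 2" "\<not> int p dvd fst g" "z \<in> grid p" "y' \<in> {0..<int p}"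
  defines "d \<equiv> \<lambda>w. (\<nu> w - \<nu> (shift p g w))\<^sup>2"
  shows "(\<nu> z - \<nu> (y', snd z))\<^sup>2 \<le> 2 * real p * (\<Sum>i<2 * p. d ((shift p g ^^ i) z))"
proof -
  let ?w = "\<lambda>i. (shift p g ^^ i) z"
  obtain k where "k < p" and k: "?w (2 * k) = (y', snd z)"
    using funpow_shift_reaches_fiber [OF assms(1-5)] by blast
  have "\<nu> z - \<nu> (y', snd z) = (\<Sum>i<2 * k. \<nu> (?w i) - \<nu> (shift p g (?w i)))"
    using sum_lessThan_telescope' [of "\<lambda>i. \<nu> (?w i)" "2 * k"] k by simp
  then have "(\<nu> z - \<nu> (y', snd z))\<^sup>2 \<le> (\<Sum>i<2 * k. d (?w i)) * real (2 * k)"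
    using sum_squared_le_sum_of_squares [of "\<lambda>i. \<nu> (?w i) - \<nu> (shift p g (?w i))" "{..<2 * k}"]
    by (simp add: d_def)
  also have "\<dots> \<le> (\<Sum>i<2 * p. d (?w i)) * (2 * real p)"
    using \<open>k < p\<close> by (intro mult_mono sum_mono2) (auto simp: d_def intro: sum_nonneg)
  finally show ?thesis
    by (simp add: mult.commute)
qed

lemma sum_sq_fiber_differences:
  fixes \<nu> :: "int \<times> int \<Rightarrow> real"
  assumes "\<And>e. fiber_mass p \<nu> e = 0"
  shows "(\<Sum>z\<in>grid p. \<Sum>y'\<in>{0..<int p}. (\<nu> z - \<nu> (y', snd z))\<^sup>2)
    = 2 * real p * (\<Sum>z\<in>grid p. (\<nu> z)\<^sup>2)"
proof -
  have "(\<Sum>y'\<in>{0..<int p}. (\<nu> z - \<nu> (y', snd z))\<^sup>2)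
      = real p * (\<nu> z)\<^sup>2 - 2 * \<nu> z * fiber_mass p \<nu> (snd z) + fiber_mass p (\<lambda>w. (\<nu> w)\<^sup>2) (snd z)"
    for z
    by (simp add: fiber_mass_def power2_diff sum.distrib sum_subtractf sum_distrib_left)
  then have "(\<Sum>z\<in>grid p. \<Sum>y'\<in>{0..<int p}. (\<nu> z - \<nu> (y', snd z))\<^sup>2)
      = real p * (\<Sum>z\<in>grid p. (\<nu> z)\<^sup>2) + (\<Sum>z\<in>grid p. fiber_mass p (\<lambda>w. (\<nu> w)\<^sup>2) (snd z))"
    by (simp add: assms sum.distrib sum_distrib_left)
  also have "(\<Sum>z\<in>grid p. fiber_mass p (\<lambda>w. (\<nu> w)\<^sup>2) (snd z)) = real p * (\<Sum>z\<in>grid p. (\<nu> z)\<^sup>2)"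
    by (simp add: sum_grid_fiber_mass) (simp add: sum_grid fiber_mass_def sum_distrib_left)
  finally show ?thesis
    by simp
qed

lemma poincare_shift:
  fixes \<nu> :: "int \<times> int \<Rightarrow> real"
  assumes "prime p" "p > 2" "\<not> int p dvd fst g" "\<And>e. fiber_mass p \<nu> e = 0"
  shows "(\<Sum>z\<in>grid p. (\<nu> z)\<^sup>2) \<le> 2 * real p ^ 2 * (\<Sum>z\<in>grid p. (\<nu> z - \<nu> (shift p g z))\<^sup>2)"
proof -
  define d where "d w = (\<nu> w - \<nu> (shift p g w))\<^sup>2" for w
  have "p > 0"
    using assms(2) by simp
  have "2 * real p * (\<Sum>z\<in>grid p. (\<nu> z)\<^sup>2)
      \<le> (\<Sum>z\<in>grid p. \<Sum>y'\<in>{0..<int p}. 2 * real p * (\<Sum>i<2 * p. d ((shift p g ^^ i) z)))"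
    unfolding sum_sq_fiber_differences [OF assms(4), symmetric] d_def
    by (intro sum_mono fiber_difference_le_path_energy [OF assms(1-3)]) auto
  also have "\<dots> = 2 * real p ^ 2 * (\<Sum>i<2 * p. \<Sum>z\<in>grid p. d ((shift p g ^^ i) z))"
    by (simp add: sum_distrib_left sum.swap [of _ "grid p"] power2_eq_square algebra_simps)
  also have "\<dots> = 2 * real p * (2 * real p ^ 2 * (\<Sum>z\<in>grid p. d z))"
    by (simp add: sum_funpow_shift [OF \<open>p > 0\<close>])
  finally show ?thesis
    using \<open>p > 0\<close> by (simp add: d_def)
qed

lemma fiber_energy_shift_average_le:
  assumes "prime p" "p > 2" "\<not> int p dvd fst g"
  shows "fiber_energy p (shift_average p g \<mu>) \<le> (1 - 1 / (8 * real p ^ 2)) * fiber_energy p \<mu>"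
proof -
  have "p > 0"
    using assms(2) by simp
  let ?D = "\<Sum>z\<in>grid p. (fiber_deviation p \<mu> z - fiber_deviation p \<mu> (shift p g z))\<^sup>2"
  have "fiber_energy p \<mu> \<le> 2 * real p ^ 2 * ?D"
    unfolding fiber_energy_def
    by (rule poincare_shift [OF assms]) (simp add: fiber_mass_fiber_deviation [OF \<open>p > 0\<close>])
  then have "fiber_energy p \<mu> / (8 * real p ^ 2) \<le> ?D / 4"
    using \<open>p > 0\<close> by (simp add: field_simps)
  then show ?thesis
    by (simp add: fiber_energy_shift_average [OF \<open>p > 0\<close>] algebra_simps)
qed

lemma fiber_energy_cong:
  assumes "\<And>z. z \<in> grid p \<Longrightarrow> \<mu> z = \<mu>' z"
  shows "fiber_energy p \<mu> = fiber_energy p \<mu>'"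
proof -
  have "fiber_mass p \<mu> e = fiber_mass p \<mu>' e" if "e \<in> {0..<2}" for e
    unfolding fiber_mass_def using assms that by (auto simp: grid_def intro!: sum.cong)
  then show ?thesis
    unfolding fiber_energy_def fiber_deviation_def using assms
    by (intro sum.cong) (auto simp: grid_def)
qed

lemma fiber_mass_nonneg:
  "(\<And>z. z \<in> grid p \<Longrightarrow> 0 \<le> \<mu> z) \<Longrightarrow> e \<in> {0..<2} \<Longrightarrow> 0 \<le> fiber_mass p \<mu> e"
  unfolding fiber_mass_def by (auto simp: grid_def intro: sum_nonneg)

lemma fiber_energy_le:
  assumes "p > 0" "\<And>z. z \<in> grid p \<Longrightarrow> 0 \<le> \<mu> z" "(\<Sum>z\<in>grid p. \<mu> z) = 1"
  shows "fiber_energy p \<mu> \<le> 2 * real p"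
proof -
  have "\<bar>fiber_deviation p \<mu> z\<bar> \<le> 1" if z: "z \<in> grid p" for z
  proof -
    let ?m = "fiber_mass p \<mu> (snd z)"
    have e: "snd z \<in> {0..<2}"
      using z by (auto simp: grid_def)
    have "?m \<le> (\<Sum>e\<in>{0..<2}. fiber_mass p \<mu> e)"
      using e assms(2) by (intro member_le_sum fiber_mass_nonneg) auto
    then have "?m \<le> 1"
      using assms(3) by (simp add: sum_grid_fiber_mass)
    moreover have "0 \<le> ?m"
      using assms(2) e by (rule fiber_mass_nonneg)
    ultimately have "0 \<le> ?m / real p" "?m / real p \<le> 1"
      using assms(1) by (auto simp: divide_le_eq)
    moreover have "\<mu> z \<le> 1"
      using member_le_sum [of z "grid p" \<mu>] assms z by auto
    ultimately show ?thesis
      unfolding fiber_deviation_def using assms(2) [OF z] by (simp add: abs_le_iff)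
  qed
  then have "fiber_energy p \<mu> \<le> real (card (grid p)) * 1"
    unfolding fiber_energy_def by (intro sum_bounded_above) (simp add: abs_square_le_1)
  then show ?thesis
    by (simp add: card_grid)
qed

definition cube :: "nat \<Rightarrow> (nat \<Rightarrow> int) set" where
  "cube k = {1..k} \<rightarrow>\<^sub>E {0, 1}"

definition walk_pos :: "nat \<Rightarrow> (nat \<Rightarrow> int) \<Rightarrow> (nat \<Rightarrow> int) \<Rightarrow> nat \<Rightarrow> (nat \<Rightarrow> int) \<Rightarrow> int \<times> int"
  where "walk_pos p a u k x =
    ((a 0 + (\<Sum>i=1..k. a i * x i)) mod int p, (u 0 + (\<Sum>i=1..k. u i * x i)) mod 2)"

definition walk_law :: "nat \<Rightarrow> (nat \<Rightarrow> int) \<Rightarrow> (nat \<Rightarrow> int) \<Rightarrow> nat \<Rightarrow> int \<times> int \<Rightarrow> real" where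
  "walk_law p a u k c = real (card {x \<in> cube k. walk_pos p a u k x = c}) / 2 ^ k"

lemma finite_cube [simp]: "finite (cube k)"
  by (simp add: cube_def finite_PiE)

lemma card_cube: "card (cube k) = 2 ^ k"
  by (simp add: cube_def card_PiE numeral_2_eq_2)

lemma sum_cube_Suc:
  "(\<Sum>x\<in>cube (Suc k). h x) = (\<Sum>x\<in>cube k. h (x(Suc k := 0)) + h (x(Suc k := 1)))"
proof -
  have "cube (Suc k) = (\<lambda>(y, x). x(Suc k := y)) ` ({0, 1} \<times> cube k)"
    unfolding cube_def by (simp add: atLeastAtMostSuc_conv PiE_insert_eq)
  moreover have "inj_on (\<lambda>(y, x). x(Suc k := y)) ({0, 1} \<times> cube k)"
    unfolding cube_def by (rule inj_combinator) simp
  ultimately have "(\<Sum>x\<in>cube (Suc k). h x) = (\<Sum>(y, x)\<in>{0, 1} \<times> cube k. h (x(Suc k := y)))"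
    by (simp add: sum.reindex split_def)
  then show ?thesis
    by (simp add: sum.cartesian_product [symmetric] sum.swap [of _ "{0, 1}"] sum.distrib)
qed

lemma mod_add_eq_iff:
  fixes s t c m :: int
  assumes "c \<in> {0..<m}"
  shows "(s + t) mod m = c \<longleftrightarrow> s mod m = (c - t) mod m"
proof -
  have "(s + t) mod m = c \<longleftrightarrow> m dvd (s + t) - c"
    using assms by (simp flip: mod_eq_dvd_iff)
  also have "\<dots> \<longleftrightarrow> m dvd s - (c - t)"
    by (simp add: algebra_simps)
  finally show ?thesis
    by (simp add: mod_eq_dvd_iff)
qed

lemma walk_pos_in_grid: "p > 0 \<Longrightarrow> walk_pos p a u k x \<in> grid p"
  by (simp add: walk_pos_def grid_def)

lemma walk_pos_upd:
  "walk_pos p a u (Suc k) (x(Suc k := v)) =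
    ((a 0 + (\<Sum>i=1..k. a i * x i) + a (Suc k) * v) mod int p,
     (u 0 + (\<Sum>i=1..k. u i * x i) + u (Suc k) * v) mod 2)"
proof -
  have "(\<Sum>i=1..k. w i * (x(Suc k := v)) i) = (\<Sum>i=1..k. w i * x i)" for w :: "nat \<Rightarrow> int"
    by (intro sum.cong) auto
  then show ?thesis
    by (simp add: walk_pos_def add.assoc)
qed

lemma walk_pos_step_eq_iff:
  assumes "c \<in> grid p"
  shows "walk_pos p a u (Suc k) (x(Suc k := 1)) = c
    \<longleftrightarrow> walk_pos p a u k x = shift p (a (Suc k), u (Suc k)) c"
proof -
  obtain c1 c2 where c: "c = (c1, c2)" and "c1 \<in> {0..<int p}" "c2 \<in> {0..<2}"
    using assms by (auto simp: grid_def)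
  let ?S = "a 0 + (\<Sum>i=1..k. a i * x i)" and ?U = "u 0 + (\<Sum>i=1..k. u i * x i)"
  have "walk_pos p a u (Suc k) (x(Suc k := 1)) = c
      \<longleftrightarrow> (?S + a (Suc k)) mod int p = c1 \<and> (?U + u (Suc k)) mod 2 = c2"
    by (simp only: walk_pos_upd c prod.inject mult_1_right)
  also have "\<dots> \<longleftrightarrow> ?S mod int p = (c1 - a (Suc k)) mod int p \<and> ?U mod 2 = (c2 - u (Suc k)) mod 2"
    by (simp only: mod_add_eq_iff [OF \<open>c1 \<in> {0..<int p}\<close>] mod_add_eq_iff [OF \<open>c2 \<in> {0..<2}\<close>])
  also have "\<dots> \<longleftrightarrow> walk_pos p a u k x = shift p (a (Suc k), u (Suc k)) c"
    by (simp add: walk_pos_def shift_def c)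
  finally show ?thesis .
qed

lemma walk_law_Suc:
  assumes "c \<in> grid p"
  shows "walk_law p a u (Suc k) c = shift_average p (a (Suc k), u (Suc k)) (walk_law p a u k) c"
proof -
  have card_eq_sum: "real (card {x \<in> cube j. P x}) = (\<Sum>x\<in>cube j. if P x then 1 else 0)" for j P
    by (simp flip: sum.inter_filter)
  have "walk_pos p a u (Suc k) (x(Suc k := 0)) = walk_pos p a u k x" for x
    by (simp add: walk_pos_upd walk_pos_def)
  then have "real (card {x \<in> cube (Suc k). walk_pos p a u (Suc k) x = c})
      = real (card {x \<in> cube k. walk_pos p a u k x = c})
        + real (card {x \<in> cube k. walk_pos p a u k x = shift p (a (Suc k), u (Suc k)) c})"
    unfolding card_eq_sum sum_cube_Suc walk_pos_step_eq_iff [OF assms] by (simp add: sum.distrib)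
  then show ?thesis
    by (simp add: walk_law_def shift_average_def field_simps)
qed

lemma walk_law_nonneg: "0 \<le> walk_law p a u k c"
  by (simp add: walk_law_def)

lemma sum_walk_law:
  assumes "p > 0"
  shows "(\<Sum>c\<in>grid p. walk_law p a u k c) = 1"
proof -
  have "(\<Sum>c\<in>grid p. real (card {x \<in> cube k. walk_pos p a u k x = c})) = 2 ^ k"
    using sum_fun_comp [of "cube k" "grid p" "walk_pos p a u k" "\<lambda>_. 1 :: real"] assms
    by (simp add: walk_pos_in_grid image_subset_iff card_cube)
  then show ?thesis
    by (simp add: walk_law_def flip: sum_divide_distrib)
qed

lemma fiber_energy_walk_law_le:
  assumes "prime p" "p > 2" "\<forall>i\<in>{1..t}. \<not> int p dvd a i" "k \<le> t"
  shows "fiber_energy p (walk_law p a u k) \<le> (1 - 1 / (8 * real p ^ 2)) ^ k * (2 * real p)"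
  using assms(4)
proof (induction k)
  case 0
  with assms(2) show ?case
    by (simp add: fiber_energy_le walk_law_nonneg sum_walk_law)
next
  case (Suc k)
  have "1 \<le> real p ^ 2"
    using assms(2) by (simp add: one_le_power)
  then have "0 \<le> 1 - 1 / (8 * real p ^ 2)"
    by (simp add: divide_le_eq)
  have "fiber_energy p (walk_law p a u (Suc k))
      = fiber_energy p (shift_average p (a (Suc k), u (Suc k)) (walk_law p a u k))"
    by (rule fiber_energy_cong) (simp add: walk_law_Suc)
  also have "\<dots> \<le> (1 - 1 / (8 * real p ^ 2)) * fiber_energy p (walk_law p a u k)"
    using assms Suc.prems by (intro fiber_energy_shift_average_le) auto
  also have "\<dots> \<le> (1 - 1 / (8 * real p ^ 2)) * ((1 - 1 / (8 * real p ^ 2)) ^ k * (2 * real p))"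
    using Suc \<open>0 \<le> 1 - 1 / (8 * real p ^ 2)\<close> by (intro mult_left_mono) auto
  finally show ?case
    by (simp add: mult.assoc)
qed

definition good_set :: "nat \<Rightarrow> int \<Rightarrow> (int \<times> int) set" where
  "good_set p b = {c \<in> grid p. (MM p (fst c) + snd c) mod 2 = b}"

lemma card_MM_parity_ge:
  assumes "p > 0" "e \<in> {0..<2}" "b \<in> {0, 1}"
  shows "(real p - 1) / 2 \<le> real (card {y \<in> {0..<int p}. (MM p y + e) mod 2 = b})"
proof -
  define h where "h = (int p - 1) div 2"
  have h: "int p - 2 \<le> 2 * h" "2 * h \<le> int p - 1" "0 \<le> h"
    using assms(1) by (auto simp: h_def)
  have MM: "MM p y = (if y \<le> h then 0 else 1)" if "y \<in> {0..<int p}" for y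
    using that by (auto simp: MM_def h_def)
  have e: "e = 0 \<or> e = 1"
    using assms(2) by auto
  show ?thesis
  proof (cases "b = e")
    case True
    then have "{y \<in> {0..<int p}. (MM p y + e) mod 2 = b} = {0..h}"
      using e h by (auto simp: MM split: if_splits)
    with h show ?thesis
      by simp
  next
    case False
    then have "{y \<in> {0..<int p}. (MM p y + e) mod 2 = b} = {h + 1..<int p}"
      using e assms(3) h by (auto simp: MM split: if_splits)
    with h show ?thesis
      by simp
  qed
qed

lemma sum_good_set_fiber_mean_ge:
  assumes "p > 0" "\<And>z. z \<in> grid p \<Longrightarrow> 0 \<le> \<mu> z" "(\<Sum>z\<in>grid p. \<mu> z) = 1" "b \<in> {0, 1}"
  shows "(real p - 1) / (2 * real p) \<le> (\<Sum>c\<in>good_set p b. fiber_mass p \<mu> (snd c) / real p)"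
proof -
  let ?m = "fiber_mass p \<mu>"
  have "(\<Sum>c\<in>good_set p b. ?m (snd c) / real p)
      = (\<Sum>e\<in>{0..<2}. \<Sum>y\<in>{0..<int p}. if (MM p y + e) mod 2 = b then ?m e / real p else 0)"
    unfolding good_set_def sum.inter_filter [OF finite_grid] sum_grid by (simp only: fst_conv snd_conv)
  also have "\<dots> = (\<Sum>e\<in>{0..<2}. real (card {y \<in> {0..<int p}. (MM p y + e) mod 2 = b}) * (?m e / real p))"
    by (simp flip: sum.inter_filter)
  also have "\<dots> \<ge> (\<Sum>e\<in>{0..<2}. (real p - 1) / 2 * (?m e / real p))"
    using assms by (intro sum_mono mult_right_mono card_MM_parity_ge divide_nonneg_nonneg fiber_mass_nonneg) auto
  moreover have "(\<Sum>e\<in>{0..<2}. (real p - 1) / 2 * (?m e / real p)) = (real p - 1) / (2 * real p)"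
    using assms(3) by (simp add: sum_grid_fiber_mass flip: sum_distrib_left sum_divide_distrib)
  ultimately show ?thesis
    by simp
qed

lemma abs_sum_fiber_deviation_le:
  assumes "A \<subseteq> grid p"
  shows "\<bar>\<Sum>c\<in>A. fiber_deviation p \<mu> c\<bar> \<le> sqrt (2 * real p * fiber_energy p \<mu>)"
proof -
  have card: "real (card A) \<le> 2 * real p"
    using card_mono [OF finite_grid assms] by (simp add: card_grid)
  have sq: "(\<Sum>c\<in>A. (fiber_deviation p \<mu> c)\<^sup>2) \<le> fiber_energy p \<mu>"
    unfolding fiber_energy_def by (rule sum_mono2 [OF finite_grid assms]) simp
  have "0 \<le> (\<Sum>c\<in>A. (fiber_deviation p \<mu> c)\<^sup>2)"
    by (simp add: sum_nonneg)
  then have "(\<Sum>c\<in>A. (fiber_deviation p \<mu> c)\<^sup>2) * real (card A) \<le> fiber_energy p \<mu> * (2 * real p)"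
    using mult_mono [OF sq card] sq by simp
  with sum_squared_le_sum_of_squares [of "fiber_deviation p \<mu>" A]
  have "(\<Sum>c\<in>A. fiber_deviation p \<mu> c)\<^sup>2 \<le> 2 * real p * fiber_energy p \<mu>"
    by (simp add: mult.commute)
  then show ?thesis
    using real_sqrt_le_mono by fastforce
qed

lemma sum_good_set_ge:
  assumes "p > 0" "\<And>z. z \<in> grid p \<Longrightarrow> 0 \<le> \<mu> z" "(\<Sum>z\<in>grid p. \<mu> z) = 1" "b \<in> {0, 1}"
  shows "(real p - 1) / (2 * real p) - sqrt (2 * real p * fiber_energy p \<mu>) \<le> (\<Sum>c\<in>good_set p b. \<mu> c)"
proof -
  have "(\<Sum>c\<in>good_set p b. \<mu> c)
      = (\<Sum>c\<in>good_set p b. fiber_mass p \<mu> (snd c) / real p) + (\<Sum>c\<in>good_set p b. fiber_deviation p \<mu> c)"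
    by (simp add: fiber_deviation_def flip: sum.distrib)
  moreover have "good_set p b \<subseteq> grid p"
    by (auto simp: good_set_def)
  ultimately show ?thesis
    using sum_good_set_fiber_mean_ge [OF assms] abs_sum_fiber_deviation_le [of "good_set p b" p \<mu>]
    by linarith
qed

lemma prob_eq_sum_walk_law:
  assumes "p > 0"
  shows "real (card {x \<in> {1..t} \<rightarrow>\<^sub>E {0, 1::int}.
            (MM p (a 0 + (\<Sum>i=1..t. a i * x i)) + (u 0 + (\<Sum>i=1..t. u i * x i)) mod 2) mod 2 = b})
          / 2 ^ t = (\<Sum>c\<in>good_set p b. walk_law p a u t c)"
proof -
  have "{x \<in> {1..t} \<rightarrow>\<^sub>E {0, 1::int}.
            (MM p (a 0 + (\<Sum>i=1..t. a i * x i)) + (u 0 + (\<Sum>i=1..t. u i * x i)) mod 2) mod 2 = b}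
      = {x \<in> cube t. walk_pos p a u t x \<in> good_set p b}"
    using assms by (auto simp: cube_def walk_pos_def good_set_def grid_def MM_def)
  moreover have "real (card {x \<in> cube t. walk_pos p a u t x \<in> good_set p b})
      = (\<Sum>x\<in>cube t. if walk_pos p a u t x \<in> good_set p b then 1 else 0)"
    by (simp flip: sum.inter_filter)
  also have "\<dots> = (\<Sum>c\<in>grid p. real (card {x \<in> cube t. walk_pos p a u t x = c})
                                  * (if c \<in> good_set p b then 1 else 0))"
    using sum_fun_comp [of "cube t" "grid p" "walk_pos p a u t" "\<lambda>c. if c \<in> good_set p b then 1 else 0"]
          assms
    by (simp add: walk_pos_in_grid image_subset_iff)
  also have "\<dots> = (\<Sum>c\<in>good_set p b. real (card {x \<in> cube t. walk_pos p a u t x = c}))"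
    unfolding good_set_def sum.inter_filter [OF finite_grid] by (intro sum.cong) auto
  ultimately show ?thesis
    by (simp add: walk_law_def sum_divide_distrib)
qed

lemma sum_good_set_walk_law_ge:
  assumes "prime p" "p > 2" "\<forall>i\<in>{1..t}. \<not> int p dvd a i" "b \<in> {0, 1}"
  shows "1 / 2 - 1 / (2 * real p) - 2 * real p * exp (- real t / (16 * real p ^ 2))
    \<le> (\<Sum>c\<in>good_set p b. walk_law p a u t c)"
proof -
  let ?q = "1 - 1 / (8 * real p ^ 2)" and ?e = "exp (- real t / (16 * real p ^ 2))"
  have "p > 0"
    using assms(2) by simp
  have "1 \<le> real p ^ 2"
    using assms(2) by (simp add: one_le_power)
  then have "0 \<le> ?q"
    by (simp add: divide_le_eq)
  then have "?q ^ t \<le> exp (- (1 / (8 * real p ^ 2))) ^ t"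
    using exp_ge_add_one_self [of "- (1 / (8 * real p ^ 2))"] by (intro power_mono) auto
  also have "\<dots> = ?e\<^sup>2"
    by (simp add: field_simps flip: exp_of_nat_mult exp_double)
  finally have "?q ^ t \<le> ?e\<^sup>2" .
  then have "(2 * real p)\<^sup>2 * ?q ^ t \<le> (2 * real p * ?e)\<^sup>2"
    unfolding power_mult_distrib [of _ ?e] by (rule mult_left_mono) simp
  moreover have "2 * real p * fiber_energy p (walk_law p a u t) \<le> 2 * real p * (?q ^ t * (2 * real p))"
    using fiber_energy_walk_law_le [OF assms(1-3) order_refl, of u] by (rule mult_left_mono) simp
  ultimately have "2 * real p * fiber_energy p (walk_law p a u t) \<le> (2 * real p * ?e)\<^sup>2"
    by (simp add: power2_eq_square algebra_simps)
  then have "sqrt (2 * real p * fiber_energy p (walk_law p a u t)) \<le> 2 * real p * ?e"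
    by (intro real_le_lsqrt) simp_all
  moreover have "(real p - 1) / (2 * real p) = 1 / 2 - 1 / (2 * real p)"
    using \<open>p > 0\<close> by (simp add: field_simps)
  moreover have "(real p - 1) / (2 * real p) - sqrt (2 * real p * fiber_energy p (walk_law p a u t))
      \<le> (\<Sum>c\<in>good_set p b. walk_law p a u t c)"
    using \<open>p > 0\<close> assms(4) by (intro sum_good_set_ge walk_law_nonneg sum_walk_law)
  ultimately show ?thesis
    by linarith
qed

lemma sum_good_set_walk_law_ge_cubic:
  assumes "prime p" "p > 2" "\<forall>i\<in>{1..t}. \<not> int p dvd a i" "b \<in> {0, 1}"
    and "c * real p ^ 3 \<le> real t" "4 * (real p)\<^sup>2 * exp (- c * real p / 16) \<le> 1"
  shows "1 / 2 - 1 / real p \<le> (\<Sum>c\<in>good_set p b. walk_law p a u t c)"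
proof -
  have "exp (- real t / (16 * real p ^ 2)) \<le> exp (- c * real p / 16)"
    using assms(2,5) by (simp add: field_simps power3_eq_cube power2_eq_square)
  then have "4 * (real p)\<^sup>2 * exp (- real t / (16 * real p ^ 2)) \<le> 4 * (real p)\<^sup>2 * exp (- c * real p / 16)"
    by (rule mult_left_mono) simp
  then have "4 * (real p)\<^sup>2 * exp (- real t / (16 * real p ^ 2)) \<le> 1"
    using assms(6) by linarith
  then have "2 * real p * exp (- real t / (16 * real p ^ 2)) \<le> 1 / (2 * real p)"
    using assms(2) by (simp add: field_simps power2_eq_square)
  then show ?thesis
    using sum_good_set_walk_law_ge [OF assms(1-4), of u] by simp
qed

theorem lemma5p4:
  fixes \<alpha> c1 c2 c3 c4 :: real
  assumes "0 < \<alpha>" "\<alpha> < 1" "c1 > 0" "c2 > 0" "c3 > 0" "c4 > 0"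
  shows "\<exists>C>0. \<exists>n0::nat. \<forall>n::nat \<ge> n0. \<forall>p::nat. \<forall>t::nat. \<forall>b::int. \<forall>a u :: nat \<Rightarrow> int.
    (prime p \<and> c1 * real n powr \<alpha> \<le> real p \<and> real p \<le> c2 * real n powr \<alpha>
      \<and> real t \<ge> c3 * real p ^ 3 \<and> b \<in> {0, 1}
      \<and> (\<forall>i\<in>{1..t}. 1 \<le> a i \<and> real_of_int (a i) \<le> c4 * real p / ln (real n)))
    \<longrightarrow> real (card {x \<in> {1..t} \<rightarrow>\<^sub>E {0, 1::int}.
            (MM p (a 0 + (\<Sum>i=1..t. a i * x i)) + (u 0 + (\<Sum>i=1..t. u i * x i)) mod 2) mod 2 = b})
          / 2 ^ t
        \<ge> 1/2 - C / ln (real n)"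
proof -
  have "\<forall>\<^sub>F x in at_top. 4 * x\<^sup>2 * exp (- c3 * x / 16) \<le> (1 :: real)"
    using assms(5) by real_asymp
  then obtain X where X: "\<And>x. x \<ge> X \<Longrightarrow> 4 * x\<^sup>2 * exp (- c3 * x / 16) \<le> 1"
    by (auto simp: eventually_at_top_linorder)
  have "\<forall>\<^sub>F n in sequentially. max X 3 \<le> c1 * real n powr \<alpha> \<and> ln (real n) \<le> c1 * real n powr \<alpha>
      \<and> c4 < ln (real n)"
    using assms(1,3) by (intro eventually_conj) real_asymp+
  then obtain N where N: "\<And>n. n \<ge> N \<Longrightarrow> max X 3 \<le> c1 * real n powr \<alpha>
      \<and> ln (real n) \<le> c1 * real n powr \<alpha> \<and> c4 < ln (real n)"
    by (auto simp: eventually_sequentially)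
  show ?thesis
  proof (intro exI [of _ "1::real"] exI [of _ N] conjI allI impI)
    fix n p t :: nat and b :: int and a u :: "nat \<Rightarrow> int"
    assume "N \<le> n" and H: "prime p \<and> c1 * real n powr \<alpha> \<le> real p \<and> real p \<le> c2 * real n powr \<alpha>
      \<and> real t \<ge> c3 * real p ^ 3 \<and> b \<in> {0, 1}
      \<and> (\<forall>i\<in>{1..t}. 1 \<le> a i \<and> real_of_int (a i) \<le> c4 * real p / ln (real n))"
    then have p: "X \<le> real p" "3 \<le> real p" "ln (real n) \<le> real p" and "c4 < ln (real n)"
      using N [OF \<open>N \<le> n\<close>] by auto
    then have "p > 0"
      by simp
    have "c4 * real p / ln (real n) < real p"
      using \<open>p > 0\<close> \<open>c4 < ln (real n)\<close> assms(6) by (simp add: divide_less_eq)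
    have "\<not> int p dvd a i" if "i \<in> {1..t}" for i
    proof -
      have "1 \<le> a i" "real_of_int (a i) < real p"
        using H that \<open>c4 * real p / ln (real n) < real p\<close> by fastforce+
      then show ?thesis
        by (auto dest: zdvd_imp_le)
    qed
    then have "1 / 2 - 1 / real p \<le> (\<Sum>c\<in>good_set p b. walk_law p a u t c)"
      using H X [OF p(1)] p(2) by (intro sum_good_set_walk_law_ge_cubic) auto
    moreover have "1 / real p \<le> 1 / ln (real n)"
      using p \<open>c4 < ln (real n)\<close> assms(6) by (intro divide_left_mono) auto
    ultimately show "1 / 2 - 1 / ln (real n) \<le> real (card {x \<in> {1..t} \<rightarrow>\<^sub>E {0, 1::int}.
        (MM p (a 0 + (\<Sum>i=1..t. a i * x i)) + (u 0 + (\<Sum>i=1..t. u i * x i)) mod 2) mod 2 = b}) / 2 ^ t"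
      by (simp only: prob_eq_sum_walk_law [OF \<open>p > 0\<close>])
  qed simp
qed

end
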